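(* There exist a nondeterministic planning domain $D$ and a goal $\psi$ which is an LTL$_f$ formula (equally read as an LTL formula) such that: (a) there is no policy $f$ with $(D,f)\models A^{\text{sa-fair}}\psi$, i.e., the state-action fair planning problem $\langle D,\psi\rangle$ has no solution; but (b) for every deterministic automaton $A_\psi$ over the alphabet $2^{\mathcal{F}\cup\mathcal{A}}$ accepting exactly the infinite traces that satisfy $\psi$, the state-action fair planning problem $\langle D',Acc\rangle$ has a solution, where $D'=D\times A_\psi$ is the synchronous product and $Acc$ is the goal consisting of those infinite traces of $D'$ whose projection to $D$ is accepted by $A_\psi$.
   Context: A nondeterministic planning domain is a tuple $D=(St,Act,s_0,Tr)$ with finite state set $St=2^{\mathcal{F}}$ (assignments to fluents $\mathcal{F}$), finite action set $Act=2^{\mathcal{A}}$, initial state $s_0$, and $Tr\subseteq St\times Act\times St$; every state has an applicable action. A trace is a finite or infinite sequence $(s_0\cup a_0)(s_1\cup a_1)\cdots$ starting at $s_0$ with $(s_{i-1},a_{i-1},s_i)\in Tr$. A policy is a function $f:St^+\to Act$ with $f(u)$ applicable in the last state of $u$; an $f$-trace is a trace with $f(s_0\cdots s_i)=a_i$ for all prefixes. LTL/LTL$_f$: usual syntax with atoms, $\neg$, $\wedge$, next $X$, until $U$; LTL$_f$ is interpreted on finite sequences ($X\psi$ at $j$ requires position $j+1$ to exist), and an infinite trace satisfies an LTL$_f$ formula if some finite prefix does. A goal is a set of infinite traces; a policy $f$ solves the state-action fair planning problem $\langle D,G\rangle$ if every infinite state-action fair $f$-trace is in $G$, where an infinite trace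 is state-action fair if for every transition $(s,a,s')\in Tr$, if $s,a$ occurs infinitely often then $s,a$ immediately followed by $s'$ occurs infinitely often. $(D,f)\models A^{\text{sa-fair}}\psi$ means $f$ solves the state-action fair problem with goal the set of traces satisfying $\psi$. A deterministic automaton is $(\Sigma,Q,q_0,\delta,\mathcal{C})$ with $\delta:Q\times\Sigma\to Q$, where an infinite word is accepted iff its unique run satisfies the acceptance condition $\mathcal{C}$ (of any type). The synchronous product $D\times A$ is the domain whose states are pairs $(d,q)$, initial state $(s_0,q_0)$, with a transition from $(d,q)$ to $(d',q')$ on action $a$ iff $(d,a,d')\in Tr$ and $\delta(q,d\cup a)=q'$; state-action fairness and policies in $D\times A$ are defined with respect to its own states and transitions. *)

theory Defs
  imports Main
begin

text \<open>A domain is given by its initial state s0 and transition relation Tr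
  (triples (s, a, s')); its state set is passed explicitly where needed.\<close>

definition applicable :: "('s \<times> 'act \<times> 's) set \<Rightarrow> 's \<Rightarrow> 'act \<Rightarrow> bool" where
  "applicable Tr s a \<longleftrightarrow> (\<exists>s'. (s, a, s') \<in> Tr)"

definition is_policy :: "'s set \<Rightarrow> ('s \<times> 'act \<times> 's) set \<Rightarrow> ('s list \<Rightarrow> 'act) \<Rightarrow> bool" where
  "is_policy St Tr f \<longleftrightarrow>
     (\<forall>u. u \<noteq> [] \<and> set u \<subseteq> St \<longrightarrow> applicable Tr (last u) (f u))"

definition is_inf_trace :: "'s \<Rightarrow> ('s \<times> 'act \<times> 's) set \<Rightarrow> (nat \<Rightarrow> 's \<times> 'act) \<Rightarrow> bool" where
  "is_inf_trace s0 Tr w \<longleftrightarrow>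
     fst (w 0) = s0 \<and> (\<forall>i. (fst (w i), snd (w i), fst (w (Suc i))) \<in> Tr)"

definition is_f_trace ::
  "'s \<Rightarrow> ('s \<times> 'act \<times> 's) set \<Rightarrow> ('s list \<Rightarrow> 'act) \<Rightarrow> (nat \<Rightarrow> 's \<times> 'act) \<Rightarrow> bool" where
  "is_f_trace s0 Tr f w \<longleftrightarrow>
     is_inf_trace s0 Tr w \<and> (\<forall>i. f (map (\<lambda>j. fst (w j)) [0..<Suc i]) = snd (w i))"

definition sa_fair :: "('s \<times> 'act \<times> 's) set \<Rightarrow> (nat \<Rightarrow> 's \<times> 'act) \<Rightarrow> bool" where
  "sa_fair Tr w \<longleftrightarrow>
     (\<forall>s a s'. (s, a, s') \<in> Tr \<longrightarrow> (\<exists>\<^sub>\<infinity>i. w i = (s, a)) \<longrightarrow>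
        (\<exists>\<^sub>\<infinity>i. w i = (s, a) \<and> fst (w (Suc i)) = s'))"

definition solves_sa_fair ::
  "'s \<Rightarrow> ('s \<times> 'act \<times> 's) set \<Rightarrow> ('s list \<Rightarrow> 'act) \<Rightarrow> (nat \<Rightarrow> 's \<times> 'act) set \<Rightarrow> bool" where
  "solves_sa_fair s0 Tr f G \<longleftrightarrow>
     (\<forall>w. is_f_trace s0 Tr f w \<and> sa_fair Tr w \<longrightarrow> w \<in> G)"

definition has_sa_fair_solution ::
  "'s set \<Rightarrow> 's \<Rightarrow> ('s \<times> 'act \<times> 's) set \<Rightarrow> (nat \<Rightarrow> 's \<times> 'act) set \<Rightarrow> bool" where
  "has_sa_fair_solution St s0 Tr G \<longleftrightarrow> (\<exists>f. is_policy St Tr f \<and> solves_sa_fair s0 Tr f G)"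

definition is_planning_domain ::
  "'p set \<Rightarrow> 'p set \<Rightarrow> 'p set \<Rightarrow> ('p set \<times> 'p set \<times> 'p set) set \<Rightarrow> bool" where
  "is_planning_domain F A s0 Tr \<longleftrightarrow>
     finite F \<and> finite A \<and> F \<inter> A = {} \<and> s0 \<subseteq> F \<and>
     Tr \<subseteq> Pow F \<times> Pow A \<times> Pow F \<and>
     (\<forall>s. s \<subseteq> F \<longrightarrow> (\<exists>a. applicable Tr s a))"

datatype 'p ltlf = Atom 'p | Not "'p ltlf" | And "'p ltlf" "'p ltlf"
  | Next "'p ltlf" | Until "'p ltlf" "'p ltlf"

primrec atoms :: "'p ltlf \<Rightarrow> 'p set" where
  "atoms (Atom p) = {p}"
| "atoms (Not \<phi>) = atoms \<phi>"
| "atoms (And \<phi> \<psi>) = atoms \<phi> \<union> atoms \<psi>"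
| "atoms (Next \<phi>) = atoms \<phi>"
| "atoms (Until \<phi> \<psi>) = atoms \<phi> \<union> atoms \<psi>"

text \<open>ltlf_sat w n j \<phi>: the finite sequence w 0, ..., w (n-1) satisfies \<phi> at position j (j < n).\<close>
primrec ltlf_sat :: "(nat \<Rightarrow> 'p set) \<Rightarrow> nat \<Rightarrow> nat \<Rightarrow> 'p ltlf \<Rightarrow> bool" where
  "ltlf_sat w n j (Atom p) \<longleftrightarrow> p \<in> w j"
| "ltlf_sat w n j (Not \<phi>) \<longleftrightarrow> \<not> ltlf_sat w n j \<phi>"
| "ltlf_sat w n j (And \<phi> \<psi>) \<longleftrightarrow> ltlf_sat w n j \<phi> \<and> ltlf_sat w n j \<psi>"
| "ltlf_sat w n j (Next \<phi>) \<longleftrightarrow> j + 1 < n \<and> ltlf_sat w n (j + 1) \<phi>"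
| "ltlf_sat w n j (Until \<phi> \<psi>) \<longleftrightarrow>
     (\<exists>k. j \<le> k \<and> k < n \<and> ltlf_sat w n k \<psi> \<and> (\<forall>i. j \<le> i \<and> i < k \<longrightarrow> ltlf_sat w n i \<phi>))"

definition ltlf_models_inf :: "'p ltlf \<Rightarrow> (nat \<Rightarrow> 'p set) \<Rightarrow> bool" where
  "ltlf_models_inf \<phi> w \<longleftrightarrow> (\<exists>n. 0 < n \<and> ltlf_sat w n 0 \<phi>)"

definition letters :: "(nat \<Rightarrow> 'p set \<times> 'p set) \<Rightarrow> nat \<Rightarrow> 'p set" where
  "letters w i = fst (w i) \<union> snd (w i)"

text \<open>A deterministic automaton over alphabet 2^P with finite state set Q, initial state q0,
  transition function \<delta>, and a Muller acceptance condition Acc (a set of sets of states);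
  Muller conditions subsume all the usual acceptance types (Buchi, co-Buchi, parity,
  Rabin, Streett, ...).\<close>
definition is_det_automaton :: "'p set \<Rightarrow> 'q set \<Rightarrow> 'q \<Rightarrow> ('q \<Rightarrow> 'p set \<Rightarrow> 'q) \<Rightarrow> bool" where
  "is_det_automaton P Q q0 \<delta> \<longleftrightarrow>
     finite Q \<and> q0 \<in> Q \<and> (\<forall>q \<in> Q. \<forall>\<sigma>. \<sigma> \<subseteq> P \<longrightarrow> \<delta> q \<sigma> \<in> Q)"

fun run :: "'q \<Rightarrow> ('q \<Rightarrow> 'p set \<Rightarrow> 'q) \<Rightarrow> (nat \<Rightarrow> 'p set) \<Rightarrow> nat \<Rightarrow> 'q" where
  "run q0 \<delta> w 0 = q0"
| "run q0 \<delta> w (Suc i) = \<delta> (run q0 \<delta> w i) (w i)"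

definition aut_accepts :: "'q \<Rightarrow> ('q \<Rightarrow> 'p set \<Rightarrow> 'q) \<Rightarrow> 'q set set \<Rightarrow> (nat \<Rightarrow> 'p set) \<Rightarrow> bool" where
  "aut_accepts q0 \<delta> Acc w \<longleftrightarrow> {q. \<exists>\<^sub>\<infinity>i. run q0 \<delta> w i = q} \<in> Acc"

definition prod_Tr ::
  "('p set \<times> 'p set \<times> 'p set) set \<Rightarrow> 'q set \<Rightarrow> ('q \<Rightarrow> 'p set \<Rightarrow> 'q)
   \<Rightarrow> (('p set \<times> 'q) \<times> 'p set \<times> ('p set \<times> 'q)) set" where
  "prod_Tr Tr Q \<delta> = {((d, q), a, (d', q')) | d q a d' q'.
      (d, a, d') \<in> Tr \<and> q \<in> Q \<and> \<delta> q (d \<union> a) = q'}"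

definition prod_goal ::
  "'p set \<Rightarrow> ('p set \<times> 'p set \<times> 'p set) set \<Rightarrow> 'q set \<Rightarrow> 'q \<Rightarrow> ('q \<Rightarrow> 'p set \<Rightarrow> 'q) \<Rightarrow> 'q set set
   \<Rightarrow> (nat \<Rightarrow> ('p set \<times> 'q) \<times> 'p set) set" where
  "prod_goal s0 Tr Q q0 \<delta> Acc = {w. is_inf_trace (s0, q0) (prod_Tr Tr Q \<delta>) w \<and>
      aut_accepts q0 \<delta> Acc (\<lambda>i. fst (fst (w i)) \<union> snd (w i))}"

end

theory Submission
  imports Defs "HOL-Library.Omega_Words_Fun"
begin

text \<open>The domain has one fluent p and only the empty action: from a state without p the
  successor may or may not contain p, and p is always switched off again at once. The goal is
  F (p \<and> XX p). In the domain itself the policy is forced, and the trace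
  \<emptyset> {p} \<emptyset> \<emptyset> {p} \<emptyset> ... takes every transition infinitely often without ever showing p twice
  at distance two.

  In the product, fairness acts on each automaton state separately. If a fair product trace
  missed the goal, the automaton would have to be in different states right after a p and right
  before a p, because the continuation \<emptyset> {p} \<emptyset> \<emptyset> ... completes a witness in the first
  case only. But some automaton state q is reached infinitely often right after a p, hence with
  p off, and fairness at (\<emptyset>, q) then makes the next letter a p.\<close>

text \<open>The syntax has no constant true; \<open>\<not> (\<phi> \<and> \<not> \<phi>)\<close> stands in for it.\<close>

definition Eventually :: "'p ltlf \<Rightarrow> 'p ltlf" where
  "Eventually \<phi> = Until (Not (And \<phi> (Not \<phi>))) \<phi>"

definition twice_two_apart :: "'p \<Rightarrow> 'p ltlf" where
  "twice_two_apart p = Eventually (And (Atom p) (Next (Next (Atom p))))"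

lemma ltlf_models_inf_Eventually:
  "ltlf_models_inf (Eventually \<phi>) w \<longleftrightarrow> (\<exists>n k. k < n \<and> ltlf_sat w n k \<phi>)"
  unfolding ltlf_models_inf_def Eventually_def by (auto intro: le_less_trans[OF le0])

lemma ltlf_models_inf_twice_two_apart:
  "ltlf_models_inf (twice_two_apart p) w \<longleftrightarrow> (\<exists>k. p \<in> w k \<and> p \<in> w (Suc (Suc k)))"
proof
  assume "ltlf_models_inf (twice_two_apart p) w"
  then show "\<exists>k. p \<in> w k \<and> p \<in> w (Suc (Suc k))"
    by (auto simp: twice_two_apart_def ltlf_models_inf_Eventually)
next
  assume "\<exists>k. p \<in> w k \<and> p \<in> w (Suc (Suc k))"
  then obtain k where "ltlf_sat w (k + 3) k (And (Atom p) (Next (Next (Atom p))))"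
    by auto
  then show "ltlf_models_inf (twice_two_apart p) w"
    unfolding twice_two_apart_def ltlf_models_inf_Eventually
    by (intro exI[of _ "k + 3"] exI[of _ k]) simp
qed

lemma INFM_mod_eq:
  assumes "r < m"
  shows "\<exists>\<^sub>\<infinity>i::nat. i mod m = r"
  unfolding INFM_nat_le
proof
  fix n
  have "n \<le> n * m + r"
    using assms by (cases m) auto
  then show "\<exists>i\<ge>n. i mod m = r"
    using assms by (intro exI[of _ "n * m + r"]) simp
qed

lemma INFM_pigeonhole:
  assumes "finite A" and "\<And>i. g i \<in> A" and "\<exists>\<^sub>\<infinity>i. P i"
  shows "\<exists>a. \<exists>\<^sub>\<infinity>i. P i \<and> g i = a"
proof -
  have "\<exists>\<^sub>\<infinity>i. \<exists>a\<in>A. P i \<and> g i = a"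
    using assms(3) by (rule INFM_mono) (use assms(2) in blast)
  then show ?thesis
    using INFM_finite_Bex_distrib[OF assms(1), of "\<lambda>a i. P i \<and> g i = a"] by blast
qed

lemma run_in_states:
  assumes "is_det_automaton P Q q0 \<delta>" and "\<And>i. w i \<subseteq> P"
  shows "run q0 \<delta> w n \<in> Q"
  using assms by (induction n) (auto simp: is_det_automaton_def)

lemma aut_accepts_limit: "aut_accepts q0 \<delta> Acc w \<longleftrightarrow> limit (run q0 \<delta> w) \<in> Acc"
  by (simp add: aut_accepts_def limit_def)

lemma run_conc_prefix: "k \<le> n \<Longrightarrow> run q0 \<delta> (prefix n v \<frown> u) k = run q0 \<delta> v k"
  by (induction k) (simp_all add: subsequence_def)

lemma suffix_run_conc_prefix:
  "suffix n (run q0 \<delta> (prefix n v \<frown> u)) = run (run q0 \<delta> v n) \<delta> u"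
proof
  fix m
  show "suffix n (run q0 \<delta> (prefix n v \<frown> u)) m = run (run q0 \<delta> v n) \<delta> u m"
    by (induction m) (simp_all add: run_conc_prefix)
qed

lemma aut_accepts_conc_prefix:
  "aut_accepts q0 \<delta> Acc (prefix n v \<frown> u) \<longleftrightarrow> aut_accepts (run q0 \<delta> v n) \<delta> Acc u"
  by (metis aut_accepts_limit limit_suffix suffix_run_conc_prefix)

lemma prod_Tr_iff:
  "((d, q), a, (d', q')) \<in> prod_Tr Tr Q \<delta> \<longleftrightarrow> (d, a, d') \<in> Tr \<and> q \<in> Q \<and> q' = \<delta> q (d \<union> a)"
  by (auto simp: prod_Tr_def)

lemma twice_two_apart_automaton_separates:
  assumes recognizes: "\<And>w. (\<And>i. w i \<subseteq> {p}) \<Longrightarrow>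
      aut_accepts q0 \<delta> Acc w \<longleftrightarrow> ltlf_models_inf (twice_two_apart p) w"
    and word: "\<And>i. v i \<subseteq> {p}" and not_sat: "\<not> ltlf_models_inf (twice_two_apart p) v"
    and "p \<in> v i" and "p \<in> v (Suc j)"
  shows "run q0 \<delta> v (Suc i) \<noteq> run q0 \<delta> v j"
proof
  assume same_state: "run q0 \<delta> v (Suc i) = run q0 \<delta> v j"
  define u where "u n = (if n = 1 then {p} else {})" for n :: nat
  have conc_u: "(prefix n v \<frown> u) k = (if k < n then v k else if k = n + 1 then {p} else {})" for n k
    by (auto simp: conc_def subsequence_def u_def)
  have letters_in: "(prefix n v \<frown> u) k \<subseteq> {p}" for n k
    using word by (simp add: conc_u)
  have "ltlf_models_inf (twice_two_apart p) (prefix (Suc i) v \<frown> u)"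
    unfolding ltlf_models_inf_twice_two_apart conc_u using \<open>p \<in> v i\<close> by (intro exI[of _ i]) simp
  moreover have "aut_accepts q0 \<delta> Acc (prefix j v \<frown> u) \<longleftrightarrow>
      aut_accepts q0 \<delta> Acc (prefix (Suc i) v \<frown> u)"
    unfolding aut_accepts_conc_prefix same_state ..
  ultimately have "ltlf_models_inf (twice_two_apart p) (prefix j v \<frown> u)"
    by (simp only: recognizes[OF letters_in])
  then obtain k where k: "p \<in> (prefix j v \<frown> u) k" "p \<in> (prefix j v \<frown> u) (Suc (Suc k))"
    by (auto simp: ltlf_models_inf_twice_two_apart)
  with \<open>p \<in> v (Suc j)\<close> have "p \<in> v k \<and> p \<in> v (Suc (Suc k))"
    by (auto simp: conc_u split: if_splits)
  with not_sat show False
    by (auto simp: ltlf_models_inf_twice_two_apart)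
qed

definition flicker_Tr :: "'p \<Rightarrow> ('p set \<times> 'p set \<times> 'p set) set" where
  "flicker_Tr p = {({}, {}, {}), ({}, {}, {p}), ({p}, {}, {})}"

lemma flicker_planning_domain: "is_planning_domain {p} {} {} (flicker_Tr p)"
proof -
  have "applicable (flicker_Tr p) s {}" if "s \<subseteq> {p}" for s
    using that subset_singletonD[OF that] by (auto simp: applicable_def flicker_Tr_def)
  then show ?thesis
    by (auto simp: is_planning_domain_def flicker_Tr_def)
qed

lemma flicker_policy_empty:
  assumes "is_policy (Pow {p}) (flicker_Tr p) f" and "u \<noteq> []" and "set u \<subseteq> Pow {p}"
  shows "f u = {}"
  using assms by (auto simp: is_policy_def applicable_def flicker_Tr_def)

definition flicker_cycle :: "'p \<Rightarrow> nat \<Rightarrow> 'p set \<times> 'p set" where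
  "flicker_cycle p i = (if i mod 3 = 1 then {p} else {}, {})"

lemma flicker_cycle_f_trace:
  assumes "is_policy (Pow {p}) (flicker_Tr p) f"
  shows "is_f_trace {} (flicker_Tr p) f (flicker_cycle p)"
proof -
  have "(fst (flicker_cycle p i), snd (flicker_cycle p i), fst (flicker_cycle p (Suc i)))
          \<in> flicker_Tr p" for i
    by (auto simp: flicker_cycle_def flicker_Tr_def mod_Suc)
  moreover have "f (map (\<lambda>j. fst (flicker_cycle p j)) [0..<Suc i]) = snd (flicker_cycle p i)" for i
    by (rule flicker_policy_empty[OF assms, THEN trans]) (auto simp: flicker_cycle_def)
  ultimately show ?thesis
    by (simp add: is_f_trace_def is_inf_trace_def flicker_cycle_def)
qed

lemma flicker_cycle_sa_fair: "sa_fair (flicker_Tr p) (flicker_cycle p)"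
  unfolding sa_fair_def
proof (intro allI impI)
  fix s a s'
  assume "(s, a, s') \<in> flicker_Tr p"
  then consider "s = {}" "a = {}" "s' = {}" | "s = {}" "a = {}" "s' = {p}" | "s = {p}" "a = {}" "s' = {}"
    by (auto simp: flicker_Tr_def)
  then obtain r where "r < 3"
    and r: "\<And>i. i mod 3 = r \<Longrightarrow> flicker_cycle p i = (s, a) \<and> fst (flicker_cycle p (Suc i)) = s'"
  proof cases
    case 1
    show ?thesis by (rule that[of 2]) (auto simp: 1 flicker_cycle_def mod_Suc)
  next
    case 2
    show ?thesis by (rule that[of 0]) (auto simp: 2 flicker_cycle_def mod_Suc)
  next
    case 3
    show ?thesis by (rule that[of 1]) (auto simp: 3 flicker_cycle_def mod_Suc)
  qed
  show "\<exists>\<^sub>\<infinity>i. flicker_cycle p i = (s, a) \<and> fst (flicker_cycle p (Suc i)) = s'"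
    using INFM_mod_eq[OF \<open>r < 3\<close>] by (rule INFM_mono) (rule r)
qed

lemma flicker_cycle_not_twice_two_apart:
  "\<not> ltlf_models_inf (twice_two_apart p) (letters (flicker_cycle p))"
proof
  assume "ltlf_models_inf (twice_two_apart p) (letters (flicker_cycle p))"
  then obtain k where "k mod 3 = 1" "Suc (Suc k) mod 3 = 1"
    by (auto simp: ltlf_models_inf_twice_two_apart letters_def flicker_cycle_def split: if_splits)
  then show False by presburger
qed

lemma flicker_no_sa_fair_solution:
  "\<not> has_sa_fair_solution (Pow {p}) {} (flicker_Tr p) {w. ltlf_models_inf (twice_two_apart p) (letters w)}"
  using flicker_cycle_f_trace flicker_cycle_sa_fair flicker_cycle_not_twice_two_apart
  by (fastforce simp: has_sa_fair_solution_def solves_sa_fair_def)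

lemma flicker_word_twice_two_apart:
  assumes aut: "is_det_automaton {p} Q q0 \<delta>"
    and recognizes: "\<And>w. (\<And>i. w i \<subseteq> {p}) \<Longrightarrow>
      aut_accepts q0 \<delta> Acc w \<longleftrightarrow> ltlf_models_inf (twice_two_apart p) w"
    and word: "\<And>i. v i \<subseteq> {p}" and off_after_on: "\<And>i. p \<in> v i \<Longrightarrow> v (Suc i) = {}"
    and fair: "\<And>q. \<exists>\<^sub>\<infinity>i. v i = {} \<and> run q0 \<delta> v i = q \<Longrightarrow>
      \<exists>\<^sub>\<infinity>i. v i = {} \<and> run q0 \<delta> v i = q \<and> p \<in> v (Suc i)"
  shows "ltlf_models_inf (twice_two_apart p) v"
proof (rule ccontr)
  assume not_sat: "\<not> ltlf_models_inf (twice_two_apart p) v"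
  let ?r = "run q0 \<delta> v"
  have finite_Q: "finite Q" and r_in: "\<And>i. ?r i \<in> Q"
    using aut run_in_states[OF aut word] by (auto simp: is_det_automaton_def)
  have "\<exists>\<^sub>\<infinity>i. v i = {}"
    unfolding INFM_nat_le
  proof
    fix m
    have "v m = {} \<or> v (Suc m) = {}"
      using word[of m] off_after_on[of m] by blast
    then show "\<exists>i\<ge>m. v i = {}" by (meson le_Suc_eq order_refl)
  qed
  then obtain q1 where "\<exists>\<^sub>\<infinity>i. v i = {} \<and> ?r i = q1"
    using INFM_pigeonhole[where g = ?r, OF finite_Q r_in] by blast
  then have "\<exists>\<^sub>\<infinity>i. p \<in> v (Suc i)"
    by (rule INFM_mono[OF fair]) blast
  then have "\<exists>\<^sub>\<infinity>i. p \<in> v i"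
    by (rule INFM_inj) simp
  then obtain qs where qs: "\<exists>\<^sub>\<infinity>i. p \<in> v i \<and> ?r (Suc i) = qs"
    using INFM_pigeonhole[where g = "\<lambda>i. ?r (Suc i)", OF finite_Q r_in] by blast
  then obtain i where "p \<in> v i" "?r (Suc i) = qs"
    by (auto dest: INFM_EX)
  from qs have "\<exists>\<^sub>\<infinity>i. v (Suc i) = {} \<and> ?r (Suc i) = qs"
    by (rule INFM_mono) (use off_after_on in blast)
  then have "\<exists>\<^sub>\<infinity>i. v i = {} \<and> ?r i = qs"
    by (rule INFM_inj) simp
  then obtain j where "?r j = qs" "p \<in> v (Suc j)"
    by (auto dest: fair INFM_EX)
  then show False
    using twice_two_apart_automaton_separates[OF recognizes word not_sat \<open>p \<in> v i\<close>]
      \<open>?r (Suc i) = qs\<close> by blast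
qed

lemma flicker_prod_trace:
  assumes "is_inf_trace ({}, q0) (prod_Tr (flicker_Tr p) Q \<delta>) w"
  obtains v where "\<And>i. w i = ((v i, run q0 \<delta> v i), {})" and "\<And>i. v i \<subseteq> {p}"
    and "\<And>i. p \<in> v i \<Longrightarrow> v (Suc i) = {}" and "\<And>i. run q0 \<delta> v i \<in> Q"
proof
  define v where "v i = fst (fst (w i))" for i
  define r where "r i = snd (fst (w i))" for i
  have "((v i, r i), snd (w i), (v (Suc i), r (Suc i))) \<in> prod_Tr (flicker_Tr p) Q \<delta>" for i
    using assms by (simp add: is_inf_trace_def v_def r_def)
  then have step: "(v i, snd (w i), v (Suc i)) \<in> flicker_Tr p \<and> r i \<in> Q \<and>
      r (Suc i) = \<delta> (r i) (v i \<union> snd (w i))" for i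
    by (simp add: prod_Tr_iff)
  then have no_action: "snd (w i) = {}" for i
    by (auto simp: flicker_Tr_def)
  have r_run: "r i = run q0 \<delta> v i" for i
    using assms step by (induction i) (simp_all add: is_inf_trace_def r_def no_action)
  show "w i = ((v i, run q0 \<delta> v i), {})" for i
    by (simp add: prod_eq_iff v_def no_action flip: r_run) (simp add: r_def)
  show "v i \<subseteq> {p}" and "p \<in> v i \<Longrightarrow> v (Suc i) = {}" for i
    using step[of i] by (auto simp: flicker_Tr_def no_action)
  show "run q0 \<delta> v i \<in> Q" for i
    using step[of i] by (simp add: r_run)
qed

lemma flicker_product_has_sa_fair_solution:
  assumes aut: "is_det_automaton {p} Q q0 \<delta>"
    and recognizes: "\<And>w. (\<And>i. w i \<subseteq> {p}) \<Longrightarrow>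
      aut_accepts q0 \<delta> Acc w \<longleftrightarrow> ltlf_models_inf (twice_two_apart p) w"
  shows "has_sa_fair_solution (Pow {p} \<times> Q) ({}, q0) (prod_Tr (flicker_Tr p) Q \<delta>)
           (prod_goal {} (flicker_Tr p) Q q0 \<delta> Acc)"
proof -
  have "applicable (prod_Tr (flicker_Tr p) Q \<delta>) s {}" if "s \<in> Pow {p} \<times> Q" for s
    using that
    by (cases s) (auto simp: applicable_def prod_Tr_iff flicker_Tr_def dest: subset_singletonD)
  then have policy: "is_policy (Pow {p} \<times> Q) (prod_Tr (flicker_Tr p) Q \<delta>) (\<lambda>_. {})"
    unfolding is_policy_def by (meson last_in_set subsetD)
  have "w \<in> prod_goal {} (flicker_Tr p) Q q0 \<delta> Acc"
    if f_trace: "is_f_trace ({}, q0) (prod_Tr (flicker_Tr p) Q \<delta>) (\<lambda>_. {}) w"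
      and fair: "sa_fair (prod_Tr (flicker_Tr p) Q \<delta>) w" for w
  proof -
    have trace: "is_inf_trace ({}, q0) (prod_Tr (flicker_Tr p) Q \<delta>) w"
      using f_trace by (simp add: is_f_trace_def)
    then obtain v where w: "\<And>i. w i = ((v i, run q0 \<delta> v i), {})" and word: "\<And>i. v i \<subseteq> {p}"
      and off_after_on: "\<And>i. p \<in> v i \<Longrightarrow> v (Suc i) = {}" and r_in: "\<And>i. run q0 \<delta> v i \<in> Q"
      using flicker_prod_trace[OF trace] by blast
    have "\<exists>\<^sub>\<infinity>i. v i = {} \<and> run q0 \<delta> v i = q \<and> p \<in> v (Suc i)"
      if infinitely_at_q: "\<exists>\<^sub>\<infinity>i. v i = {} \<and> run q0 \<delta> v i = q" for q
    proof -
      have "q \<in> Q"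
        using infinitely_at_q r_in by (auto dest: INFM_EX)
      then have "(({}, q), {}, ({p}, \<delta> q {})) \<in> prod_Tr (flicker_Tr p) Q \<delta>"
        by (simp add: prod_Tr_iff flicker_Tr_def)
      moreover have "\<exists>\<^sub>\<infinity>i. w i = (({}, q), {})"
        using infinitely_at_q by (rule INFM_mono) (simp add: w)
      ultimately have "\<exists>\<^sub>\<infinity>i. w i = (({}, q), {}) \<and> fst (w (Suc i)) = ({p}, \<delta> q {})"
        using fair by (simp add: sa_fair_def)
      then show ?thesis
        by (rule INFM_mono) (simp add: w)
    qed
    then have "ltlf_models_inf (twice_two_apart p) v"
      using flicker_word_twice_two_apart[where v = v, OF aut recognizes word off_after_on] by blast
    then have "aut_accepts q0 \<delta> Acc v"
      using recognizes word by blast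
    moreover have "(\<lambda>i. fst (fst (w i)) \<union> snd (w i)) = v"
      by (simp add: w)
    ultimately show ?thesis
      using trace by (simp add: prod_goal_def)
  qed
  with policy show ?thesis
    unfolding has_sa_fair_solution_def solves_sa_fair_def by blast
qed

theorem theorem1:
  shows "\<exists>(F :: nat set) (A :: nat set) (s0 :: nat set) Tr (\<psi> :: nat ltlf).
    is_planning_domain F A s0 Tr \<and> atoms \<psi> \<subseteq> F \<union> A \<and>
    \<not> has_sa_fair_solution (Pow F) s0 Tr {w. ltlf_models_inf \<psi> (letters w)} \<and>
    (\<forall>(Q :: nat set) q0 \<delta> Acc.
       is_det_automaton (F \<union> A) Q q0 \<delta> \<and>
       (\<forall>w. (\<forall>i. w i \<subseteq> F \<union> A) \<longrightarrow> (aut_accepts q0 \<delta> Acc w \<longleftrightarrow> ltlf_models_inf \<psi> w))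
       \<longrightarrow> has_sa_fair_solution (Pow F \<times> Q) (s0, q0) (prod_Tr Tr Q \<delta>)
             (prod_goal s0 Tr Q q0 \<delta> Acc))"
proof (rule exI[of _ "{0}"], rule exI[of _ "{}"], rule exI[of _ "{}"], rule exI[of _ "flicker_Tr 0"],
    rule exI[of _ "twice_two_apart 0"], intro conjI allI impI)
  show "is_planning_domain {0} {} {} (flicker_Tr 0)"
    by (rule flicker_planning_domain)
  show "atoms (twice_two_apart 0) \<subseteq> {0} \<union> {}"
    by (simp add: twice_two_apart_def Eventually_def)
  show "\<not> has_sa_fair_solution (Pow {0}) {} (flicker_Tr 0)
      {w. ltlf_models_inf (twice_two_apart 0) (letters w)}"
    by (rule flicker_no_sa_fair_solution)
  fix Q :: "nat set" and q0 \<delta> Acc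
  assume "is_det_automaton ({0} \<union> {}) Q q0 \<delta> \<and>
    (\<forall>w. (\<forall>i. w i \<subseteq> {0} \<union> {}) \<longrightarrow> (aut_accepts q0 \<delta> Acc w \<longleftrightarrow> ltlf_models_inf (twice_two_apart 0) w))"
  then show "has_sa_fair_solution (Pow {0} \<times> Q) ({}, q0) (prod_Tr (flicker_Tr 0) Q \<delta>)
      (prod_goal {} (flicker_Tr 0) Q q0 \<delta> Acc)"
    by (intro flicker_product_has_sa_fair_solution) auto
qed

end
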